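(* For Variant 1 of the generalized one-way trading problem under Assumption A with $0<L<U$, the optimal competitive ratio (smallest competitive ratio achievable by an online algorithm) is the solution $\alpha^*>1$ of $\alpha^*=\ln\frac{U-L}{\alpha^*L-L}$.
   Context: Variant 1: a single knapsack of capacity $C$; items $n=1,\dots,N$ arrive one at a time; item $n$ has size $D_n>0$ and value function $g_n:[0,D_n]\to\mathbb R_{\ge0}$, revealed on arrival. Any remaining capacity at the end is filled at the lowest marginal value $L$: the offline problem is $\max\sum_n g_n(y_n)+(C-\sum_n y_n)L$ s.t. $\sum_n y_n\le C$, $0\le y_n\le D_n$, and an online algorithm choosing $y_1,\dots,y_N$ earns $\sum_n g_n(y_n)+(C-\sum_n y_n)L$. Assumption A: each $g_n$ is non-decreasing, differentiable, concave, $g_n(0)=0$, $L\le g_n'\le U$, with $C,L,U$ known. An online algorithm irrevocably chooses $y_n$ on arrival using only items $1,\dots,n$ and $C,L,U$; competitive ratio is $\sup_{\mathcal I}\mathrm{OPT}/\mathrm{ALG}$ over instances satisfying Assumption A. *)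

theory Defs
  imports "HOL-Analysis.Analysis"
begin

text \<open>An item is a pair (D, g): its size D and its value function g
  (only the values of g on [0, D] are relevant).  An instance is the list of
  items in arrival order.\<close>

type_synonym item = "real \<times> (real \<Rightarrow> real)"

definition valid_item :: "real \<Rightarrow> real \<Rightarrow> item \<Rightarrow> bool" where
  "valid_item L U it \<longleftrightarrow>
     (let D = fst it; g = snd it in
        D > 0 \<and> g 0 = 0 \<and> mono_on {0..D} g \<and> concave_on {0..D} g \<and>
        (\<forall>x\<in>{0..D}. \<exists>d. (g has_real_derivative d) (at x within {0..D})
                         \<and> L \<le> d \<and> d \<le> U))"

definition valid_instance :: "real \<Rightarrow> real \<Rightarrow> item list \<Rightarrow> bool" where
  "valid_instance L U I \<longleftrightarrow> (\<forall>it\<in>set I. valid_item L U it)"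

definition feasible_alloc :: "real \<Rightarrow> item list \<Rightarrow> (nat \<Rightarrow> real) \<Rightarrow> bool" where
  "feasible_alloc C I y \<longleftrightarrow>
     (\<forall>n<length I. 0 \<le> y n \<and> y n \<le> fst (I ! n)) \<and> (\<Sum>n<length I. y n) \<le> C"

definition objective :: "real \<Rightarrow> real \<Rightarrow> item list \<Rightarrow> (nat \<Rightarrow> real) \<Rightarrow> real" where
  "objective C L I y = (\<Sum>n<length I. snd (I ! n) (y n)) + (C - (\<Sum>n<length I. y n)) * L"

definition OPT :: "real \<Rightarrow> real \<Rightarrow> item list \<Rightarrow> real" where
  "OPT C L I = Sup (objective C L I ` {y. feasible_alloc C I y})"

text \<open>A deterministic online algorithm maps the sequence of items revealed so far
  (including the current one) to the irrevocable decision for the current item.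
  It may depend on C, L, U since it is chosen after these are fixed.\<close>
type_synonym online_alg = "item list \<Rightarrow> real"

definition online_decisions :: "online_alg \<Rightarrow> item list \<Rightarrow> nat \<Rightarrow> real" where
  "online_decisions A I = (\<lambda>n. A (take (Suc n) I))"

definition ALG :: "real \<Rightarrow> real \<Rightarrow> online_alg \<Rightarrow> item list \<Rightarrow> real" where
  "ALG C L A I = objective C L I (online_decisions A I)"

definition feasible_online :: "real \<Rightarrow> real \<Rightarrow> real \<Rightarrow> online_alg \<Rightarrow> bool" where
  "feasible_online C L U A \<longleftrightarrow>
     (\<forall>I. valid_instance L U I \<longrightarrow> feasible_alloc C I (online_decisions A I))"

definition competitive_ratio :: "real \<Rightarrow> real \<Rightarrow> real \<Rightarrow> online_alg \<Rightarrow> ereal" where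
  "competitive_ratio C L U A =
     (SUP I\<in>{I. valid_instance L U I}. ereal (OPT C L I / ALG C L A I))"

end

(* Write G t = (t - 1) L e^t.  For t > 1 the fixed-point equation for alpha says exactly
   G alpha = U - L, and G is strictly increasing, so alpha exists and is unique.

   Upper bound: let phi w = (alpha - 1) L e^(alpha w / C) and Phi its antiderivative.  At
   utilization w the algorithm buys the amount y maximizing g y - L y - Phi (w + y).  The
   first-order conditions make y optimal for the item priced at L + phi (w + y) (when the
   knapsack is full, phi C = U - L and g' <= U take over).  Pricing item n at L + phi of the
   utilization after it and the capacity at L + phi of the final utilization gives a dual
   bound on OPT that telescopes to at most alpha times the algorithm's value.

   Lower bound: an adversary presents items of size C with unit prices L + q rho^n,
   q = (r - 1) L, rising geometrically up to U and stopping at any time.  Being r-competitive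
   on every prefix j forces weighted purchases sum rho^n y_n >= C (rho^j - 1) / r; by Abel
   summation the plain total is then at least C m (1 - 1/rho) / r, which tends to
   C ln ((U - L) / q) / r as the price grid is refined.  Capacity C thus forces
   G r >= U - L, i.e. r >= alpha. *)

theory Submission
  imports Defs "HOL-Real_Asymp.Real_Asymp"
begin

section \<open>Tangents and maxima on an interval\<close>

lemma concave_on_Icc_le_tangent:
  fixes f :: "real \<Rightarrow> real"
  assumes f: "concave_on {a..b} f" and der: "(f has_real_derivative d) (at y within {a..b})"
    and x: "x \<in> {a..b}" and y: "y \<in> {a..b}"
  shows "f x \<le> f y + d * (x - y)"
proof -
  have cvx: "convex_on {a..b} (\<lambda>t. - f t)"
    using f by (simp add: concave_on_def)
  have slope: "((\<lambda>t. (f t - f y) / (t - y)) \<longlongrightarrow> d) (at y within {a..b})"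
    using der by (simp add: has_field_derivative_iff)
  show ?thesis
  proof (cases x y rule: linorder_cases)
    case less
    have "((\<lambda>t. (f t - f y) / (t - y)) \<longlongrightarrow> d) (at_left y)"
      using tendsto_within_subset[OF slope, of "{a..y}"] y at_within_Icc_at_left[of a y] less x
      by auto
    moreover have "\<forall>\<^sub>F t in at_left y. (f t - f y) / (t - y) \<le> (f x - f y) / (x - y)"
    proof -
      have "(f t - f y) / (t - y) \<le> (f x - f y) / (x - y)" if "x < t" "t < y" for t
        using convex_on_slope_le(2)[OF cvx, of x y t] that x y
        by (simp add: minus_diff_eq[symmetric, of "f y"] divide_minus_left del: minus_diff_eq)
      then show ?thesis
        unfolding eventually_at_left_field using less by blast
    qed
    ultimately have "d \<le> (f x - f y) / (x - y)"
      by (rule tendsto_upperbound) simp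
    with less show ?thesis by (simp add: neg_le_divide_eq mult.commute)
  next
    case equal
    then show ?thesis by simp
  next
    case greater
    have "((\<lambda>t. (f t - f y) / (t - y)) \<longlongrightarrow> d) (at_right y)"
      using tendsto_within_subset[OF slope, of "{y..b}"] y at_within_Icc_at_right[of y b] greater x
      by auto
    moreover have "\<forall>\<^sub>F t in at_right y. (f x - f y) / (x - y) \<le> (f t - f y) / (t - y)"
    proof -
      have "(f x - f y) / (x - y) \<le> (f t - f y) / (t - y)" if "y < t" "t < x" for t
        using convex_on_slope_le(1)[OF cvx, of y x t] that x y
        by (simp add: minus_diff_eq[symmetric, of t] minus_diff_eq[symmetric, of x] del: minus_diff_eq)
      then show ?thesis
        unfolding eventually_at_right_field using greater by blast
    qed
    ultimately have "(f x - f y) / (x - y) \<le> d"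
      by (rule tendsto_lowerbound) simp
    with greater show ?thesis by (simp add: pos_divide_le_eq mult.commute)
  qed
qed

lemma Icc_max_derivative_sign:
  fixes h :: "real \<Rightarrow> real"
  assumes max: "\<forall>z\<in>{a..b}. h z \<le> h y" and y: "y \<in> {a..b}"
    and der: "(h has_real_derivative e) (at y within {a..b})"
  shows "a < y \<Longrightarrow> 0 \<le> e" and "y < b \<Longrightarrow> e \<le> 0"
proof -
  assume "a < y"
  show "0 \<le> e"
  proof (rule ccontr)
    assume "\<not> 0 \<le> e"
    then obtain \<delta> where "\<delta> > 0"
      and dec: "\<forall>t>0. y - t \<in> {a..b} \<longrightarrow> t < \<delta> \<longrightarrow> h y < h (y - t)"
      using has_real_derivative_neg_dec_left[OF der] by auto
    define t where "t = min \<delta> (y - a) / 2"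
    have "0 < t" "t < \<delta>" "y - t \<in> {a..b}"
      using \<open>\<delta> > 0\<close> \<open>a < y\<close> y by (auto simp: t_def min_def field_simps)
    then show False
      using dec max by fastforce
  qed
next
  assume "y < b"
  show "e \<le> 0"
  proof (rule ccontr)
    assume "\<not> e \<le> 0"
    then obtain \<delta> where "\<delta> > 0"
      and inc: "\<forall>t>0. y + t \<in> {a..b} \<longrightarrow> t < \<delta> \<longrightarrow> h y < h (y + t)"
      using has_real_derivative_pos_inc_right[OF der] by auto
    define t where "t = min \<delta> (b - y) / 2"
    have "0 < t" "t < \<delta>" "y + t \<in> {a..b}"
      using \<open>\<delta> > 0\<close> \<open>y < b\<close> y by (auto simp: t_def min_def field_simps)
    then show False
      using inc max by fastforce
  qed
qed

section \<open>Offline optimum, weak duality and competitive ratio\<close>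

lemma objective_eq:
  "objective C L I y = C * L + (\<Sum>n<length I. snd (I ! n) (y n) - L * y n)"
  by (simp add: objective_def sum_subtractf sum_distrib_left algebra_simps)

lemma feasible_alloc_zero:
  assumes "valid_instance L U I" and "0 \<le> C"
  shows "feasible_alloc C I (\<lambda>_. 0)"
  using assms by (auto simp: feasible_alloc_def valid_instance_def valid_item_def Let_def
      less_imp_le dest!: nth_mem)

lemma valid_item_le_size:
  assumes "valid_item L U (D, g)" and "0 \<le> y" and "y \<le> D"
  shows "g y \<le> g D"
  using assms by (auto simp: valid_item_def Let_def elim!: mono_onD)

lemma bdd_above_objective:
  assumes "valid_instance L U I" and "0 \<le> L"
  shows "bdd_above (objective C L I ` {y. feasible_alloc C I y})"
proof (rule bdd_aboveI2)
  fix y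
  assume "y \<in> {y. feasible_alloc C I y}"
  then have y: "\<And>n. n < length I \<Longrightarrow> 0 \<le> y n \<and> y n \<le> fst (I ! n)"
    by (auto simp: feasible_alloc_def)
  have "(\<Sum>n<length I. snd (I ! n) (y n)) \<le> (\<Sum>n<length I. snd (I ! n) (fst (I ! n)))"
  proof (rule sum_mono)
    fix n
    assume "n \<in> {..<length I}"
    then have "valid_item L U (fst (I ! n), snd (I ! n))"
      using assms(1) by (simp add: valid_instance_def)
    then show "snd (I ! n) (y n) \<le> snd (I ! n) (fst (I ! n))"
      using y \<open>n \<in> {..<length I}\<close> by (blast intro: valid_item_le_size)
  qed
  moreover have "0 \<le> (\<Sum>n<length I. y n)"
    using y by (auto intro: sum_nonneg)
  then have "(C - (\<Sum>n<length I. y n)) * L \<le> C * L"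
    using assms(2) by (simp add: mult_right_mono)
  ultimately show "objective C L I y \<le> (\<Sum>n<length I. snd (I ! n) (fst (I ! n))) + C * L"
    unfolding objective_def by linarith
qed

lemma objective_le_OPT:
  assumes "valid_instance L U I" and "0 \<le> L" and "feasible_alloc C I y"
  shows "objective C L I y \<le> OPT C L I"
  unfolding OPT_def using assms bdd_above_objective[OF assms(1,2)] by (intro cSup_upper) auto

lemma OPT_le_dual_bound:
  assumes I: "valid_instance L U I" and "0 \<le> C" and "0 \<le> \<Theta>"
    and \<theta>_le: "\<And>n. n < length I \<Longrightarrow> \<theta> n \<le> \<Theta>"
    and v: "\<And>n x. n < length I \<Longrightarrow> 0 \<le> x \<Longrightarrow> x \<le> fst (I ! n) \<Longrightarrow>
      snd (I ! n) x - (L + \<theta> n) * x \<le> v n"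
  shows "OPT C L I \<le> C * L + \<Theta> * C + (\<Sum>n<length I. v n)"
  unfolding OPT_def
proof (rule cSup_least)
  show "objective C L I ` {y. feasible_alloc C I y} \<noteq> {}"
    using feasible_alloc_zero[OF I \<open>0 \<le> C\<close>] by blast
next
  fix z
  assume "z \<in> objective C L I ` {y. feasible_alloc C I y}"
  then obtain y where z: "z = objective C L I y" and "feasible_alloc C I y"
    by blast
  then have y: "\<And>n. n < length I \<Longrightarrow> 0 \<le> y n \<and> y n \<le> fst (I ! n)"
    and total: "(\<Sum>n<length I. y n) \<le> C"
    by (auto simp: feasible_alloc_def)
  have "(\<Sum>n<length I. snd (I ! n) (y n) - L * y n)
      = (\<Sum>n<length I. snd (I ! n) (y n) - (L + \<theta> n) * y n) + (\<Sum>n<length I. \<theta> n * y n)"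
    by (simp add: algebra_simps sum.distrib[symmetric])
  also have "\<dots> \<le> (\<Sum>n<length I. v n) + (\<Sum>n<length I. \<Theta> * y n)"
    using y v \<theta>_le by (intro add_mono sum_mono mult_right_mono) auto
  also have "\<dots> \<le> (\<Sum>n<length I. v n) + \<Theta> * C"
    using total \<open>0 \<le> \<Theta>\<close> by (simp add: sum_distrib_left[symmetric] mult_left_mono)
  finally show "z \<le> C * L + \<Theta> * C + (\<Sum>n<length I. v n)"
    unfolding z objective_eq by linarith
qed

lemma online_decisions_take:
  "n < k \<Longrightarrow> online_decisions A (take k I) n = online_decisions A I n"
  by (simp add: online_decisions_def min_def)

lemma OPT_le_competitive_ratio_mul_ALG:
  assumes "valid_instance L U I" and "competitive_ratio C L U A \<le> ereal r"
    and "0 < ALG C L A I"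
  shows "OPT C L I \<le> r * ALG C L A I"
proof -
  have "ereal (OPT C L I / ALG C L A I) \<le> competitive_ratio C L U A"
    unfolding competitive_ratio_def using assms(1) by (intro SUP_upper) auto
  then have "OPT C L I / ALG C L A I \<le> r"
    using assms(2) by (metis ereal_less_eq(3) order_trans)
  with assms(3) show ?thesis
    by (simp add: pos_divide_le_eq mult.commute)
qed

section \<open>Lower bound: adversarial instances with rising prices\<close>

definition linear_instance :: "real \<Rightarrow> (nat \<Rightarrow> real) \<Rightarrow> nat \<Rightarrow> item list" where
  "linear_instance D p k = map (\<lambda>n. (D, \<lambda>y. p n * y)) [0..<k]"

lemma length_linear_instance [simp]: "length (linear_instance D p k) = k"
  by (simp add: linear_instance_def)

lemma nth_linear_instance [simp]: "n < k \<Longrightarrow> linear_instance D p k ! n = (D, \<lambda>y. p n * y)"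
  by (simp add: linear_instance_def del: upt_Suc)

lemma take_linear_instance: "j \<le> k \<Longrightarrow> take j (linear_instance D p k) = linear_instance D p j"
  by (simp add: linear_instance_def take_map del: upt_Suc)

lemma valid_item_linear:
  assumes "0 \<le> L" and "L \<le> p" and "p \<le> U" and "0 < D"
  shows "valid_item L U (D, \<lambda>y. p * y)"
proof -
  have "mono_on {0..D} (\<lambda>y. p * y)"
    using assms by (intro mono_onI) (auto intro: mult_left_mono)
  moreover have "concave_on {0..D} (\<lambda>y. p * y)"
    unfolding concave_on_iff by (auto simp: algebra_simps)
  moreover have "((\<lambda>y. p * y) has_real_derivative p) (at x within {0..D})" for x
    by (auto intro!: derivative_eq_intros)
  ultimately show ?thesis
    using assms unfolding valid_item_def by (auto intro!: exI[of _ p])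
qed

lemma valid_instance_linear_instance:
  assumes "0 \<le> L" and "0 < D" and "\<And>n. n < k \<Longrightarrow> L \<le> p n \<and> p n \<le> U"
  shows "valid_instance L U (linear_instance D p k)"
  using assms by (auto simp: valid_instance_def linear_instance_def intro!: valid_item_linear)

lemma objective_linear_instance:
  "objective C L (linear_instance D p k) y = C * L + (\<Sum>n<k. (p n - L) * y n)"
  by (simp add: objective_eq algebra_simps)

lemma OPT_linear_instance_ge:
  assumes "valid_instance L U (linear_instance C p k)" and "0 \<le> L" and "0 \<le> C" and "j < k"
  shows "C * p j \<le> OPT C L (linear_instance C p k)"
proof -
  define y where "y n = (if n = j then C else 0)" for n
  have "feasible_alloc C (linear_instance C p k) y"
    using assms by (auto simp: feasible_alloc_def y_def)
  then have "objective C L (linear_instance C p k) y \<le> OPT C L (linear_instance C p k)"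
    using assms by (intro objective_le_OPT) auto
  moreover have "objective C L (linear_instance C p k) y = C * p j"
    using assms(4) by (simp add: objective_linear_instance y_def algebra_simps if_distrib sum.If_cases)
  ultimately show ?thesis
    by simp
qed

lemma geometric_weighted_sum_ge:
  fixes s :: "nat \<Rightarrow> real"
  assumes \<rho>: "1 \<le> \<rho>"
    and weighted: "\<And>j. j \<le> m \<Longrightarrow> c * (\<rho> ^ j - 1) \<le> (\<Sum>n\<le>j. \<rho> ^ n * s n)"
  shows "c * real m * (1 - 1 / \<rho>) \<le> (\<Sum>n\<le>m. s n)"
proof -
  define T where "T j = (\<Sum>n\<le>j. \<rho> ^ n * s n)" for j
  have \<rho>_pow: "0 < \<rho> ^ j" for j
    using \<rho> by simp
  \<comment> \<open>Abel summation, writing \<open>s n\<close> as \<open>(T n - T (n - 1)) / \<rho> ^ n\<close>\<close>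
  have abel: "c * (real j * (1 - 1 / \<rho>) - 1 + 1 / \<rho> ^ j)
      \<le> (\<Sum>n\<le>j. s n) - T j / \<rho> ^ j"
    if "j \<le> m" for j
    using that
  proof (induction j)
    case 0
    then show ?case by (simp add: T_def)
  next
    case (Suc j)
    have "0 \<le> 1 / \<rho> ^ j - 1 / \<rho> ^ Suc j"
      using \<rho> \<rho>_pow[of j] by (simp add: field_simps)
    then have "c * (\<rho> ^ j - 1) * (1 / \<rho> ^ j - 1 / \<rho> ^ Suc j)
        \<le> T j * (1 / \<rho> ^ j - 1 / \<rho> ^ Suc j)"
      using weighted[of j] Suc.prems by (intro mult_right_mono) (simp_all add: T_def)
    moreover have "T (Suc j) / \<rho> ^ Suc j = T j / \<rho> ^ Suc j + s (Suc j)"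
      using \<rho> by (simp add: T_def add_divide_distrib)
    then have "(\<Sum>n\<le>Suc j. s n) - T (Suc j) / \<rho> ^ Suc j
        = ((\<Sum>n\<le>j. s n) - T j / \<rho> ^ j) + T j * (1 / \<rho> ^ j - 1 / \<rho> ^ Suc j)"
      by (simp add: algebra_simps)
    moreover have "c * (real (Suc j) * (1 - 1 / \<rho>) - 1 + 1 / \<rho> ^ Suc j)
        = c * (real j * (1 - 1 / \<rho>) - 1 + 1 / \<rho> ^ j)
          + c * (\<rho> ^ j - 1) * (1 / \<rho> ^ j - 1 / \<rho> ^ Suc j)"
      using \<rho>_pow[of j] \<rho> by (simp add: field_simps)
    ultimately show ?case
      using Suc by simp
  qed
  have "c * (\<rho> ^ m - 1) / \<rho> ^ m \<le> T m / \<rho> ^ m"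
    using weighted[of m] \<rho>_pow[of m] by (simp add: T_def divide_right_mono)
  moreover have "c * (\<rho> ^ m - 1) / \<rho> ^ m = c * (1 - 1 / \<rho> ^ m)"
    using \<rho> by (simp add: right_diff_distrib diff_divide_distrib)
  moreover have "c * real m * (1 - 1 / \<rho>)
      = c * (real m * (1 - 1 / \<rho>) - 1 + 1 / \<rho> ^ m) + c * (1 - 1 / \<rho> ^ m)"
    by (simp add: algebra_simps)
  ultimately show ?thesis
    using abel[of m] by linarith
qed

lemma linear_instance_prefix_bound:
  assumes C: "0 < C" and L: "0 < L" and A: "feasible_online C L U A"
    and ratio: "competitive_ratio C L U A \<le> ereal r"
    and p: "\<And>n. n < k \<Longrightarrow> L \<le> p n \<and> p n \<le> U" and "j < k"
  shows "C * p j
    \<le> r * (C * L + (\<Sum>n\<le>j. (p n - L) * online_decisions A (linear_instance C p k) n))"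
proof -
  define d where "d = online_decisions A (linear_instance C p k)"
  define J where "J = linear_instance C p (Suc j)"
  have valid: "valid_instance L U (linear_instance C p k')" if "k' \<le> k" for k'
    using L C p that by (intro valid_instance_linear_instance) auto
  have "feasible_alloc C (linear_instance C p k) d"
    using A valid[of k] by (simp add: feasible_online_def d_def)
  then have d: "\<And>n. n < k \<Longrightarrow> 0 \<le> d n"
    by (simp add: feasible_alloc_def)
  have "J = take (Suc j) (linear_instance C p k)"
    using \<open>j < k\<close> by (simp add: J_def take_linear_instance)
  then have dJ: "online_decisions A J n = d n" if "n < Suc j" for n
    using that by (simp add: d_def online_decisions_take)
  have "ALG C L A J = C * L + (\<Sum>n<Suc j. (p n - L) * online_decisions A J n)"
    unfolding ALG_def J_def by (rule objective_linear_instance)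
  also have "\<dots> = C * L + (\<Sum>n\<le>j. (p n - L) * d n)"
    using dJ by (simp add: lessThan_Suc_atMost)
  finally have ALG: "ALG C L A J = C * L + (\<Sum>n\<le>j. (p n - L) * d n)" .
  have "0 \<le> (\<Sum>n\<le>j. (p n - L) * d n)"
    using p d \<open>j < k\<close> by (intro sum_nonneg) simp
  then have "0 < ALG C L A J"
    using ALG C L by (simp add: add_pos_nonneg)
  then have "OPT C L J \<le> r * ALG C L A J"
    using valid[of "Suc j"] \<open>j < k\<close> ratio
    by (intro OPT_le_competitive_ratio_mul_ALG) (simp_all add: J_def)
  moreover have "C * p j \<le> OPT C L J"
    unfolding J_def using valid[of "Suc j"] \<open>j < k\<close> C L
    by (intro OPT_linear_instance_ge) simp_all
  ultimately show ?thesis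
    using ALG by (simp add: d_def)
qed

lemma price_gap_le_of_competitive_ratio_le:
  fixes C L U r :: real
  assumes C: "0 < C" and L: "0 < L" "L < U" and A: "feasible_online C L U A"
    and ratio: "competitive_ratio C L U A \<le> ereal r" and r: "1 < r"
  shows "U - L \<le> (r - 1) * L * exp r"
proof (rule ccontr)
  define q where "q = (r - 1) * L"
  define l where "l = ln ((U - L) / q)"
  have q: "0 < q"
    using r L by (simp add: q_def)
  assume "\<not> U - L \<le> (r - 1) * L * exp r"
  then have "exp r < (U - L) / q"
    using q by (simp add: q_def pos_less_divide_eq mult.commute)
  then have "r < l"
    using ln_less_cancel_iff[of "exp r" "(U - L) / q"] q L by (simp add: l_def)
  have "((\<lambda>m. real m * (1 - exp (- l / real m))) \<longlongrightarrow> l) sequentially"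
    by real_asymp
  from order_tendstoD(1)[OF this \<open>r < l\<close>]
  obtain m where m: "r < real m * (1 - exp (- l / real m))"
    by (auto simp: eventually_sequentially)
  then have "0 < m"
    using r by (cases m) auto
  define \<rho> where "\<rho> = exp (l / real m)"
  have \<rho>: "1 \<le> \<rho>"
    using \<open>r < l\<close> r by (simp add: \<rho>_def)
  have \<rho>_pow_m: "\<rho> ^ m = (U - L) / q"
    using \<open>0 < m\<close> q L by (simp add: \<rho>_def l_def exp_of_nat_mult[symmetric])
  define p where "p n = L + q * \<rho> ^ n" for n
  have p: "L \<le> p n \<and> p n \<le> U" if "n < Suc m" for n
  proof -
    have "q * \<rho> ^ n \<le> q * \<rho> ^ m"
      using \<rho> q that by (simp add: power_increasing)
    then show ?thesis
      using q \<rho> \<rho>_pow_m by (simp add: p_def)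
  qed
  define d where "d = online_decisions A (linear_instance C p (Suc m))"
  have "C / r * (\<rho> ^ j - 1) \<le> (\<Sum>n\<le>j. \<rho> ^ n * d n)" if "j \<le> m" for j
  proof -
    have "C * (L + q * \<rho> ^ j) \<le> r * (C * L + q * (\<Sum>n\<le>j. \<rho> ^ n * d n))"
      using linear_instance_prefix_bound[where k = "Suc m" and p = p and j = j, OF C L(1) A ratio p] that
      by (simp add: p_def d_def sum_distrib_left mult.assoc)
    then have "q * (C * (\<rho> ^ j - 1)) \<le> q * (r * (\<Sum>n\<le>j. \<rho> ^ n * d n))"
      by (simp add: q_def algebra_simps)
    then show ?thesis
      using q r by (simp add: pos_divide_le_eq mult.commute mult.left_commute)
  qed
  then have "C / r * real m * (1 - 1 / \<rho>) \<le> (\<Sum>n\<le>m. d n)"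
    by (rule geometric_weighted_sum_ge[OF \<rho>])
  also have "\<dots> \<le> C"
  proof -
    have "valid_instance L U (linear_instance C p (Suc m))"
      using L C p by (intro valid_instance_linear_instance) auto
    with A have "feasible_alloc C (linear_instance C p (Suc m)) d"
      by (simp add: feasible_online_def d_def)
    then show ?thesis
      by (simp add: feasible_alloc_def lessThan_Suc_atMost)
  qed
  finally have "C / r * (real m * (1 - 1 / \<rho>)) \<le> C / r * r"
    using r by simp
  moreover have "0 < C / r"
    using C r by simp
  ultimately have "real m * (1 - 1 / \<rho>) \<le> r"
    by (simp only: mult_le_cancel_left_pos)
  then have "real m * (1 - exp (- l / real m)) \<le> r"
    by (simp add: \<rho>_def exp_minus inverse_eq_divide)
  with m show False
    by linarith
qed

section \<open>The fixed-point equation\<close>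

lemma price_gap_strict_mono:
  fixes L s t :: real
  assumes "0 < L" and "1 \<le> s" and "s < t"
  shows "(s - 1) * L * exp s < (t - 1) * L * exp t"
proof -
  have "(s - 1) * exp s \<le> (s - 1) * exp t"
    using assms by (intro mult_left_mono) auto
  also have "\<dots> < (t - 1) * exp t"
    using assms by (intro mult_strict_right_mono) auto
  finally show ?thesis
    using assms(1) by (simp add: mult.commute mult.left_commute)
qed

lemma ex1_price_gap_eq:
  fixes L U :: real
  assumes L: "0 < L" and "L < U"
  shows "\<exists>!\<alpha>. 1 < \<alpha> \<and> (\<alpha> - 1) * L * exp \<alpha> = U - L"
proof -
  define G where "G t = (t - 1) * L * exp t" for t :: real
  have "G 1 \<le> U - L"
    using assms by (simp add: G_def)
  moreover have "G (U / L) = (U - L) * exp (U / L)"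
    using assms by (simp add: G_def field_simps)
  then have "U - L \<le> G (U / L)"
    using assms by simp
  moreover have "1 \<le> U / L"
    using assms by simp
  moreover have "continuous_on {1..U / L} G"
    unfolding G_def by (intro continuous_intros)
  ultimately obtain \<alpha> where "1 \<le> \<alpha>" and "G \<alpha> = U - L"
    using IVT'[of G 1 "U - L" "U / L"] by blast
  moreover have "\<alpha> \<noteq> 1"
    using \<open>G \<alpha> = U - L\<close> assms by (auto simp: G_def)
  ultimately have "1 < \<alpha> \<and> G \<alpha> = U - L"
    by simp
  moreover have "\<beta> = \<alpha>" if "1 < \<beta> \<and> G \<beta> = U - L" for \<beta>
    using that \<open>1 < \<alpha> \<and> G \<alpha> = U - L\<close> price_gap_strict_mono[OF L, of \<alpha> \<beta>]
      price_gap_strict_mono[OF L, of \<beta> \<alpha>]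
    by (cases \<alpha> \<beta> rule: linorder_cases) (auto simp: G_def)
  ultimately show ?thesis
    unfolding G_def by blast
qed

lemma fixed_point_iff_price_gap_eq:
  fixes L U \<alpha> :: real
  assumes "0 < L" and "L < U" and "1 < \<alpha>"
  shows "\<alpha> = ln ((U - L) / (\<alpha> * L - L)) \<longleftrightarrow> (\<alpha> - 1) * L * exp \<alpha> = U - L"
proof -
  have pos: "0 < \<alpha> * L - L" "0 < (U - L) / (\<alpha> * L - L)"
    using assms by (simp_all add: algebra_simps)
  have "\<alpha> = ln ((U - L) / (\<alpha> * L - L)) \<longleftrightarrow> exp \<alpha> = (U - L) / (\<alpha> * L - L)"
    using pos(2) by (metis exp_ln ln_exp)
  also have "\<dots> \<longleftrightarrow> exp \<alpha> * (\<alpha> * L - L) = U - L"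
    using pos(1) by (auto simp: eq_divide_eq)
  also have "\<dots> \<longleftrightarrow> (\<alpha> - 1) * L * exp \<alpha> = U - L"
    by (simp add: algebra_simps)
  finally show ?thesis .
qed

section \<open>The threshold algorithm\<close>

lemma valid_item_continuous_on:
  assumes "valid_item L U (D, g)"
  shows "continuous_on {0..D} g"
  unfolding continuous_on_eq_continuous_within
proof
  fix x
  assume "x \<in> {0..D}"
  moreover have "\<forall>x\<in>{0..D}. \<exists>d. (g has_real_derivative d) (at x within {0..D}) \<and> L \<le> d \<and> d \<le> U"
    using assms by (simp add: valid_item_def)
  ultimately obtain d where "(g has_real_derivative d) (at x within {0..D})"
    by blast
  then show "continuous (at x within {0..D}) g"
    by (rule DERIV_continuous)
qed

locale one_way_trading =
  fixes C L U \<alpha> :: real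
  assumes C_pos: "0 < C" and L_pos: "0 < L" and L_less_U: "L < U" and alpha_gt_1: "1 < \<alpha>"
    and price_gap_alpha: "(\<alpha> - 1) * L * exp \<alpha> = U - L"
begin

text \<open>\<open>L + phi w\<close> is the reservation price at utilization \<open>w\<close>.  It solves
  \<open>phi' = (\<alpha> / C) phi\<close> with \<open>phi 0 = (\<alpha> - 1) L\<close>, and \<open>phi C = U - L\<close> is exactly the
  equation defining \<open>\<alpha>\<close>.\<close>

definition phi :: "real \<Rightarrow> real" where
  "phi w = (\<alpha> - 1) * L * exp (\<alpha> * w / C)"

definition Phi :: "real \<Rightarrow> real" where
  "Phi w = C / \<alpha> * (phi w - phi 0)"

lemma phi_pos: "0 < phi w"
  using L_pos alpha_gt_1 by (simp add: phi_def)

lemma phi_0: "phi 0 = (\<alpha> - 1) * L"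
  by (simp add: phi_def)

lemma phi_C: "phi C = U - L"
  using C_pos price_gap_alpha by (simp add: phi_def)

lemma phi_mono: "a \<le> b \<Longrightarrow> phi a \<le> phi b"
  using C_pos L_pos alpha_gt_1 by (simp add: phi_def divide_right_mono)

lemma Phi_has_real_derivative: "(Phi has_real_derivative phi w) (at w within S)"
  unfolding Phi_def phi_def using C_pos alpha_gt_1
  by (auto intro!: derivative_eq_intros)

lemma Phi_diff_le: "Phi b - Phi a \<le> phi b * (b - a)"
proof -
  define k A B where "k = (\<alpha> - 1) * L" and "A = \<alpha> * a / C" and "B = \<alpha> * b / C"
  have "exp B - exp A \<le> exp B * (B - A)"
    using exp_ge_add_one_self[of "A - B"] mult_left_mono[of _ _ "exp B"]
    by (fastforce simp: exp_diff algebra_simps)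
  have "Phi b - Phi a = C / \<alpha> * k * (exp B - exp A)"
    by (simp add: Phi_def phi_def k_def A_def B_def algebra_simps)
  also have "\<dots> \<le> C / \<alpha> * k * (exp B * (B - A))"
    using \<open>exp B - exp A \<le> exp B * (B - A)\<close> C_pos L_pos alpha_gt_1
    by (intro mult_left_mono) (auto simp: k_def)
  also have "\<dots> = k * exp B * (C / \<alpha> * (B - A))"
    by (simp add: field_simps)
  also have "\<dots> = phi b * (b - a)"
    using C_pos alpha_gt_1 by (simp add: phi_def k_def A_def B_def field_simps)
  finally show ?thesis .
qed

lemma Phi_mono: "a \<le> b \<Longrightarrow> Phi a \<le> Phi b"
  using phi_mono[of a b] C_pos alpha_gt_1
  unfolding Phi_def by (intro mult_left_mono) auto

definition pseudo_utility :: "real \<Rightarrow> item \<Rightarrow> real \<Rightarrow> real" where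
  "pseudo_utility w it y = snd it y - L * y - Phi (w + y)"

definition optimal_purchase :: "real \<Rightarrow> item \<Rightarrow> real \<Rightarrow> bool" where
  "optimal_purchase w it y \<longleftrightarrow> y \<in> {0..min (fst it) (C - w)} \<and>
     (\<forall>z\<in>{0..min (fst it) (C - w)}. pseudo_utility w it z \<le> pseudo_utility w it y)"

definition purchase :: "real \<Rightarrow> item \<Rightarrow> real" where
  "purchase w it = (SOME y. optimal_purchase w it y)"

lemma optimal_purchase_purchase:
  assumes it: "valid_item L U it" and "w \<le> C"
  shows "optimal_purchase w it (purchase w it)"
proof -
  obtain D g where it_eq: "it = (D, g)"
    by fastforce
  define S where "S = {0..min D (C - w)}"
  have "0 < D"
    using it by (simp add: it_eq valid_item_def)
  have "continuous_on {0..D} g"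
    using it unfolding it_eq by (rule valid_item_continuous_on)
  then have "continuous_on S g"
    by (rule continuous_on_subset) (auto simp: S_def)
  then have "continuous_on S (pseudo_utility w it)"
    unfolding pseudo_utility_def Phi_def phi_def it_eq snd_conv
    using C_pos by (intro continuous_intros) auto
  moreover have "compact S" and "S \<noteq> {}"
    using \<open>0 < D\<close> \<open>w \<le> C\<close> by (auto simp: S_def)
  ultimately have "\<exists>y\<in>S. \<forall>z\<in>S. pseudo_utility w it z \<le> pseudo_utility w it y"
    by (intro continuous_attains_sup) auto
  then have "\<exists>y. optimal_purchase w it y"
    by (auto simp: optimal_purchase_def S_def it_eq)
  then show ?thesis
    unfolding purchase_def by (rule someI_ex)
qed

lemma optimal_purchase_gain:
  assumes "valid_item L U it" and "optimal_purchase w it y"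
  shows "Phi (w + y) - Phi w \<le> snd it y - L * y"
proof -
  have "0 \<in> {0..min (fst it) (C - w)}"
    using assms(2) by (auto simp: optimal_purchase_def)
  then have "pseudo_utility w it 0 \<le> pseudo_utility w it y"
    using assms(2) by (auto simp: optimal_purchase_def)
  moreover have "snd it 0 = 0"
    using assms(1) by (simp add: valid_item_def Let_def)
  ultimately show ?thesis
    by (simp add: pseudo_utility_def)
qed

lemma optimal_purchase_linearized:
  assumes item: "valid_item L U (D, g)" and opt: "optimal_purchase w (D, g) y" and x: "x \<in> {0..D}"
  shows "g x - (L + phi (w + y)) * x \<le> g y - (L + phi (w + y)) * y"
proof -
  define c where "c = min D (C - w)"
  have y: "y \<in> {0..c}"
    and max: "\<forall>z\<in>{0..c}. pseudo_utility w (D, g) z \<le> pseudo_utility w (D, g) y"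
    using opt by (simp_all add: optimal_purchase_def c_def)
  have "concave_on {0..D} g"
    and "\<forall>x\<in>{0..D}. \<exists>e. (g has_real_derivative e) (at x within {0..D}) \<and> L \<le> e \<and> e \<le> U"
    using item by (simp_all add: valid_item_def)
  moreover have "y \<in> {0..D}"
    using y by (simp add: c_def)
  ultimately obtain e where e: "(g has_real_derivative e) (at y within {0..D})" "e \<le> U"
    and tangent: "g x \<le> g y + e * (x - y)"
    using x concave_on_Icc_le_tangent by blast
  define slack where "slack = e - L - phi (w + y)"
  have "(g has_real_derivative e) (at y within {0..c})"
    using e(1) by (rule has_field_derivative_subset) (simp add: c_def)
  then have "(pseudo_utility w (D, g) has_real_derivative slack) (at y within {0..c})"
    unfolding pseudo_utility_def slack_def snd_conv
    by (auto intro!: derivative_eq_intros DERIV_chain2[OF Phi_has_real_derivative])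
  note foc = Icc_max_derivative_sign[OF max y this]
  have "slack * (x - y) \<le> 0"
  proof (cases x y rule: linorder_cases)
    case less
    then show ?thesis
      using foc(1) x by (simp add: mult_nonneg_nonpos)
  next
    case equal
    then show ?thesis by simp
  next
    case greater
    have "slack \<le> 0"
    proof (cases "y < c")
      case True
      then show ?thesis by (rule foc(2))
    next
      case False
      then have "w + y = C"
        using y greater x by (auto simp: c_def min_def split: if_splits)
      then show ?thesis
        using e(2) phi_C by (simp add: slack_def)
    qed
    then show ?thesis
      using greater by (simp add: mult_nonpos_nonneg)
  qed
  with tangent show ?thesis
    by (simp add: slack_def algebra_simps)
qed

definition utilization :: "item list \<Rightarrow> real" where
  "utilization = foldl (\<lambda>w it. w + purchase w it) 0"

definition algo :: online_alg where
  "algo I = purchase (utilization (butlast I)) (last I)"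

lemma utilization_snoc [simp]:
  "utilization (I @ [it]) = utilization I + purchase (utilization I) it"
  by (simp add: utilization_def)

lemma utilization_bounds:
  "valid_instance L U I \<Longrightarrow> 0 \<le> utilization I \<and> utilization I \<le> C"
proof (induction I rule: rev_induct)
  case Nil
  then show ?case
    using C_pos by (simp add: utilization_def)
next
  case (snoc it I)
  then have "valid_item L U it" and "valid_instance L U I"
    by (simp_all add: valid_instance_def)
  with snoc.IH have "optimal_purchase (utilization I) it (purchase (utilization I) it)"
    by (intro optimal_purchase_purchase) auto
  with snoc.IH \<open>valid_instance L U I\<close> show ?case
    by (auto simp: optimal_purchase_def)
qed

lemma online_decisions_algo:
  "n < length I \<Longrightarrow> online_decisions algo I n = purchase (utilization (take n I)) (I ! n)"
  by (simp add: online_decisions_def algo_def take_Suc_conv_app_nth)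

lemma utilization_take:
  "n \<le> length I \<Longrightarrow> utilization (take n I) = (\<Sum>k<n. online_decisions algo I k)"
  by (induction n) (simp_all add: utilization_def online_decisions_algo take_Suc_conv_app_nth)

lemma optimal_purchase_algo:
  assumes "valid_instance L U I" and "n < length I"
  shows "optimal_purchase (\<Sum>k<n. online_decisions algo I k) (I ! n) (online_decisions algo I n)"
proof -
  have "valid_instance L U (take n I)"
    using assms(1) by (auto simp: valid_instance_def dest: in_set_takeD)
  then have "utilization (take n I) \<le> C"
    by (simp add: utilization_bounds)
  moreover have "valid_item L U (I ! n)"
    using assms by (simp add: valid_instance_def)
  ultimately show ?thesis
    using assms(2) optimal_purchase_purchase online_decisions_algo utilization_take by simp
qed

lemma feasible_online_algo: "feasible_online C L U algo"
  unfolding feasible_online_def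
proof (intro allI impI)
  fix I
  assume I: "valid_instance L U I"
  have "\<forall>n<length I. 0 \<le> online_decisions algo I n \<and> online_decisions algo I n \<le> fst (I ! n)"
    using optimal_purchase_algo[OF I] by (auto simp: optimal_purchase_def)
  moreover have "(\<Sum>n<length I. online_decisions algo I n) \<le> C"
    using utilization_take[of "length I" I] utilization_bounds[OF I] by simp
  ultimately show "feasible_alloc C I (online_decisions algo I)"
    by (simp add: feasible_alloc_def)
qed

lemma primal_dual_step:
  assumes "Phi b - Phi a \<le> v"
  shows "C * (phi b - phi a) + (v - phi b * (b - a)) \<le> \<alpha> * v"
proof -
  have "C * (phi b - phi a) = \<alpha> * (Phi b - Phi a)"
    using alpha_gt_1 by (simp add: Phi_def field_simps)
  moreover have "(\<alpha> - 1) * (Phi b - Phi a) \<le> (\<alpha> - 1) * v"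
    using assms alpha_gt_1 by (intro mult_left_mono) auto
  ultimately show ?thesis
    using Phi_diff_le[of b a] by (simp add: algebra_simps)
qed

lemma dual_value_le:
  fixes d f :: "nat \<Rightarrow> real"
  defines "W n \<equiv> \<Sum>k<n. d k"
  assumes gain: "\<And>n. n < N \<Longrightarrow> Phi (W (Suc n)) - Phi (W n) \<le> f n"
  shows "C * L + phi (W N) * C + (\<Sum>n<N. f n - phi (W (Suc n)) * d n)
    \<le> \<alpha> * (C * L + (\<Sum>n<N. f n))"
proof -
  have W_diff: "W (Suc n) - W n = d n" for n
    by (simp add: W_def)
  have "(\<Sum>n<N. C * (phi (W (Suc n)) - phi (W n))) = C * (phi (W N) - phi (W 0))"
    using sum_lessThan_telescope[of "\<lambda>n. phi (W n)" N] by (simp add: sum_distrib_left[symmetric])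
  then have "phi (W N) * C = phi 0 * C + (\<Sum>n<N. C * (phi (W (Suc n)) - phi (W n)))"
    by (simp add: W_def algebra_simps)
  then have "C * L + phi (W N) * C + (\<Sum>n<N. f n - phi (W (Suc n)) * d n) = C * L + phi 0 * C
      + (\<Sum>n<N. C * (phi (W (Suc n)) - phi (W n)) + (f n - phi (W (Suc n)) * (W (Suc n) - W n)))"
    by (simp add: sum.distrib W_diff)
  also have "\<dots> \<le> C * L + phi 0 * C + (\<Sum>n<N. \<alpha> * f n)"
    using primal_dual_step[OF gain] by (intro add_left_mono sum_mono) simp
  also have "\<dots> = \<alpha> * (C * L + (\<Sum>n<N. f n))"
    by (simp add: phi_0 sum_distrib_left algebra_simps)
  finally show ?thesis .
qed

lemma OPT_le_alpha_ALG_algo: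
  assumes I: "valid_instance L U I"
  shows "OPT C L I \<le> \<alpha> * ALG C L algo I"
proof -
  define N d where "N = length I" and "d = online_decisions algo I"
  define W where "W n = (\<Sum>k<n. d k)" for n
  define f where "f n = snd (I ! n) (d n) - L * d n" for n
  have opt: "optimal_purchase (W n) (I ! n) (d n)" if "n < N" for n
    using optimal_purchase_algo[OF I] that by (simp add: N_def d_def W_def)
  have item: "valid_item L U (I ! n)" if "n < N" for n
    using I that by (simp add: valid_instance_def N_def)
  have W_Suc: "W (Suc n) = W n + d n" for n
    by (simp add: W_def)
  have "OPT C L I \<le> C * L + phi (W N) * C + (\<Sum>n<N. f n - phi (W (Suc n)) * d n)"
    unfolding N_def
  proof (rule OPT_le_dual_bound[OF I, where \<theta> = "\<lambda>n. phi (W (Suc n))"])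
    show "0 \<le> C" and "0 \<le> phi (W (length I))"
      using C_pos phi_pos[of "W (length I)"] by simp_all
    show "phi (W (Suc n)) \<le> phi (W (length I))" if "n < length I" for n
      using that opt unfolding W_def N_def
      by (intro phi_mono sum_mono2) (auto simp: optimal_purchase_def)
    show "snd (I ! n) x - (L + phi (W (Suc n))) * x \<le> f n - phi (W (Suc n)) * d n"
      if "n < length I" and "0 \<le> x" and "x \<le> fst (I ! n)" for n x
    proof -
      obtain D g where it: "I ! n = (D, g)"
        by fastforce
      have "valid_item L U (D, g)" and "optimal_purchase (W n) (D, g) (d n)" and "x \<in> {0..D}"
        using item[of n] opt[of n] that by (simp_all add: it N_def)
      from optimal_purchase_linearized[OF this] show ?thesis
        by (simp add: it W_Suc f_def algebra_simps)
    qed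
  qed
  also have "\<dots> \<le> \<alpha> * (C * L + (\<Sum>n<N. f n))"
    unfolding W_def
  proof (rule dual_value_le)
    show "Phi (\<Sum>k<Suc n. d k) - Phi (\<Sum>k<n. d k) \<le> f n" if "n < N" for n
      using optimal_purchase_gain[OF item opt] that by (simp add: W_def f_def)
  qed
  also have "\<dots> = \<alpha> * ALG C L algo I"
    by (simp add: ALG_def objective_eq f_def N_def d_def)
  finally show ?thesis .
qed

lemma ALG_algo_pos:
  assumes I: "valid_instance L U I"
  shows "0 < ALG C L algo I"
proof -
  define d where "d = online_decisions algo I"
  have "0 \<le> snd (I ! n) (d n) - L * d n" if "n < length I" for n
  proof -
    have item: "valid_item L U (I ! n)"
      using I that by (simp add: valid_instance_def)
    have opt: "optimal_purchase (\<Sum>k<n. d k) (I ! n) (d n)"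
      using optimal_purchase_algo[OF I that] by (simp add: d_def)
    then have "Phi (\<Sum>k<n. d k) \<le> Phi ((\<Sum>k<n. d k) + d n)"
      by (intro Phi_mono) (simp add: optimal_purchase_def)
    with optimal_purchase_gain[OF item opt] show ?thesis
      by linarith
  qed
  then have "0 \<le> (\<Sum>n<length I. snd (I ! n) (d n) - L * d n)"
    by (intro sum_nonneg) simp
  then show ?thesis
    using C_pos L_pos by (simp add: ALG_def objective_eq d_def add_pos_nonneg)
qed

lemma competitive_ratio_algo_le: "competitive_ratio C L U algo \<le> ereal \<alpha>"
  unfolding competitive_ratio_def
proof (rule SUP_least)
  fix I
  assume "I \<in> {I. valid_instance L U I}"
  then have "OPT C L I / ALG C L algo I \<le> \<alpha>"
    using OPT_le_alpha_ALG_algo ALG_algo_pos by (simp add: pos_divide_le_eq mult.commute)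
  then show "ereal (OPT C L I / ALG C L algo I) \<le> ereal \<alpha>"
    by simp
qed

lemma alpha_le_competitive_ratio:
  assumes A: "feasible_online C L U A"
  shows "ereal \<alpha> \<le> competitive_ratio C L U A"
proof (rule ccontr)
  assume "\<not> ereal \<alpha> \<le> competitive_ratio C L U A"
  then have "max 1 (competitive_ratio C L U A) < ereal \<alpha>"
    using alpha_gt_1 by simp
  then obtain r where "max 1 (competitive_ratio C L U A) < ereal r" and "r < \<alpha>"
    using ereal_dense2 by fastforce
  then have "1 < r" and "competitive_ratio C L U A \<le> ereal r"
    by auto
  then have "U - L \<le> (r - 1) * L * exp r"
    using price_gap_le_of_competitive_ratio_le C_pos L_pos L_less_U A by blast
  moreover have "(r - 1) * L * exp r < (\<alpha> - 1) * L * exp \<alpha>"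
    using price_gap_strict_mono L_pos \<open>1 < r\<close> \<open>r < \<alpha>\<close> by simp
  ultimately show False
    using price_gap_alpha by simp
qed

end

theorem corollary2:
  fixes C L U :: real
  assumes "C > 0" and "0 < L" and "L < U"
  shows "(\<exists>!\<alpha>. \<alpha> > 1 \<and> \<alpha> = ln ((U - L) / (\<alpha> * L - L))) \<and>
         (\<forall>\<alpha>. \<alpha> > 1 \<and> \<alpha> = ln ((U - L) / (\<alpha> * L - L)) \<longrightarrow>
            (\<exists>A. feasible_online C L U A \<and> competitive_ratio C L U A = ereal \<alpha>) \<and>
            (\<forall>A. feasible_online C L U A \<longrightarrow> ereal \<alpha> \<le> competitive_ratio C L U A))"
proof (intro conjI allI impI)
  have fixed_point_iff: "\<alpha> > 1 \<and> \<alpha> = ln ((U - L) / (\<alpha> * L - L)) \<longleftrightarrow>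
      1 < \<alpha> \<and> (\<alpha> - 1) * L * exp \<alpha> = U - L" for \<alpha>
    using fixed_point_iff_price_gap_eq[OF assms(2,3)] by blast
  then show "\<exists>!\<alpha>. \<alpha> > 1 \<and> \<alpha> = ln ((U - L) / (\<alpha> * L - L))"
    using ex1_price_gap_eq[OF assms(2,3)] by simp
  fix \<alpha>
  assume "\<alpha> > 1 \<and> \<alpha> = ln ((U - L) / (\<alpha> * L - L))"
  then interpret one_way_trading C L U \<alpha>
    using assms fixed_point_iff by unfold_locales auto
  show "\<exists>A. feasible_online C L U A \<and> competitive_ratio C L U A = ereal \<alpha>"
    using feasible_online_algo competitive_ratio_algo_le alpha_le_competitive_ratio
    by (blast intro: antisym)
  show "ereal \<alpha> \<le> competitive_ratio C L U A" if "feasible_online C L U A" for A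
    using that by (rule alpha_le_competitive_ratio)
qed

end
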